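(* Let $G$ be a group in which every non-abelian subgroup $H$ satisfies $C_G(H)\le H$, and let $a\in G$ be a non-trivial element of infinite or odd order. If $x\in G$ satisfies $x^{-1}ax=a^{-1}$, then $x$ has finite order which is a power of $2$, and $C_G(\langle a,x\rangle)=\langle x^2\rangle$.
   Context: $C_G(H)$ denotes the centralizer of $H$ in $G$. *)

theory Defs
  imports "HOL-Algebra.Algebra"
begin

definition centralizer :: "('a, 'b) monoid_scheme \<Rightarrow> 'a set \<Rightarrow> 'a set" where
  "centralizer G H = {g \<in> carrier G. \<forall>h\<in>H. g \<otimes>\<^bsub>G\<^esub> h = h \<otimes>\<^bsub>G\<^esub> g}"

end

theory Submission
  imports Defs
begin

text \<open>
  If y inverts a, every element of \<langle>a, y\<rangle> has the form a^i y^j. As a has no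
  2-torsion, a \<noteq> a^-1, so \<langle>a, y\<rangle> is non-abelian and contains its centralizer;
  an element a^i y^j commuting with y forces a^2i = 1, hence a^i = 1, and commuting with a
  forces j to be even. Thus C(\<langle>a, y\<rangle>) = \<langle>y^2\<rangle>.
  For odd m the power x^m still inverts a, and x^2 commutes with a and x^m, so
  x^2 \<in> C(\<langle>a, x^m\<rangle>) = \<langle>x^2m\<rangle>, i.e. ord x divides 2(ml - 1) for some l. Taking m = 3
  shows ord x \<noteq> 0; taking m = q for an odd divisor q of ord x gives q | ml - 1, so q = 1.
\<close>

lemma (in group) commute_mult:
  assumes "c \<in> carrier G" "g \<in> carrier G" "h \<in> carrier G"
    and "c \<otimes> g = g \<otimes> c" "c \<otimes> h = h \<otimes> c"
  shows "c \<otimes> (g \<otimes> h) = g \<otimes> h \<otimes> c"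
proof -
  have "c \<otimes> (g \<otimes> h) = g \<otimes> c \<otimes> h"
    using assms by (simp flip: m_assoc)
  also have "\<dots> = g \<otimes> h \<otimes> c"
    using assms by (simp add: m_assoc)
  finally show ?thesis .
qed

lemma (in group) commute_inv:
  assumes "c \<in> carrier G" "g \<in> carrier G" "c \<otimes> g = g \<otimes> c"
  shows "c \<otimes> inv g = inv g \<otimes> c"
proof -
  have "c \<otimes> inv g = inv g \<otimes> (g \<otimes> c) \<otimes> inv g"
    using assms by (simp flip: m_assoc)
  also have "\<dots> = inv g \<otimes> (c \<otimes> g) \<otimes> inv g"
    using assms by simp
  also have "\<dots> = inv g \<otimes> c"
    using assms(1,2) by (simp add: m_assoc)
  finally show ?thesis .
qed

lemma (in group) centralizer_is_subgroup:
  assumes "S \<subseteq> carrier G"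
  shows "subgroup (centralizer G S) G"
proof (rule subgroupI)
  show "centralizer G S \<subseteq> carrier G"
    by (simp add: centralizer_def)
  show "centralizer G S \<noteq> {}"
    using assms by (auto simp: centralizer_def subset_iff intro!: exI[of _ \<one>])
  fix g h assume g: "g \<in> centralizer G S" and h: "h \<in> centralizer G S"
  have gh: "g \<in> carrier G" "h \<in> carrier G"
    using g h by (simp_all add: centralizer_def)
  have "inv g \<otimes> s = s \<otimes> inv g" if "s \<in> S" for s
    using commute_inv[of s g] g gh that assms by (force simp: centralizer_def)
  then show "inv g \<in> centralizer G S"
    using gh by (simp add: centralizer_def)
  have "g \<otimes> h \<otimes> s = s \<otimes> (g \<otimes> h)" if "s \<in> S" for s
    using commute_mult[of s g h] g h gh that assms by (force simp: centralizer_def)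
  then show "g \<otimes> h \<in> centralizer G S"
    using gh by (simp add: centralizer_def)
qed

lemma (in group) centralizer_generate:
  assumes "S \<subseteq> carrier G"
  shows "centralizer G (generate G S) = centralizer G S"
proof
  show "centralizer G (generate G S) \<subseteq> centralizer G S"
    unfolding centralizer_def by (auto intro: generate.incl)
  show "centralizer G S \<subseteq> centralizer G (generate G S)"
  proof
    fix c assume c: "c \<in> centralizer G S"
    then have c_carrier: "c \<in> carrier G" and c_comm: "\<And>s. s \<in> S \<Longrightarrow> c \<otimes> s = s \<otimes> c"
      by (simp_all add: centralizer_def)
    have "c \<otimes> h = h \<otimes> c" if "h \<in> generate G S" for h
      using that
    proof induction
      case one
      show ?case using c_carrier by simp
    next
      case (incl h)
      then show ?case by (rule c_comm)
    next
      case (inv h)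
      then show ?case using commute_inv[OF c_carrier] c_comm assms by blast
    next
      case (eng h k)
      have "h \<in> carrier G" "k \<in> carrier G"
        using eng.hyps generate_incl[OF assms] by auto
      then show ?case using commute_mult[OF c_carrier] eng.IH by blast
    qed
    then show "c \<in> centralizer G (generate G S)"
      using c_carrier by (simp add: centralizer_def)
  qed
qed

lemma (in group) conj_int_pow:
  assumes "g \<in> carrier G" "b \<in> carrier G"
  shows "g \<otimes> b [^] (k::int) \<otimes> inv g = (g \<otimes> b \<otimes> inv g) [^] k"
proof -
  have "(\<lambda>z. g \<otimes> z \<otimes> inv g) \<in> hom G G"
    using assms by (auto simp: hom_def m_assoc[symmetric]) (simp add: m_assoc)
  then show ?thesis
    using hom_int_pow assms is_group by fastforce
qed

lemma (in group) inverts_if_conj_eq_inv: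
  assumes "y \<in> carrier G" "a \<in> carrier G" "inv y \<otimes> a \<otimes> y = inv a"
  shows "y \<otimes> a = inv a \<otimes> y"
  using assms by (metis inv_closed inv_solve_left inv_solve_right m_assoc m_closed)

lemma (in group) inverting_int_pow:
  assumes y: "y \<in> carrier G" and a: "a \<in> carrier G" and inverts: "y \<otimes> a = inv a \<otimes> y"
  shows "y \<otimes> a [^] (k::int) = a [^] (-k) \<otimes> y"
proof -
  have "y \<otimes> a \<otimes> inv y = inv a"
    using inverts y a by (simp add: inv_solve_right')
  then have "y \<otimes> a [^] k \<otimes> inv y = a [^] (-k)"
    using conj_int_pow[OF y a, of k] a by (simp add: int_pow_inv int_pow_neg)
  then show ?thesis
    using y a by (simp add: inv_solve_right')
qed

lemma (in group) inverting_int_pow_commute: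
  assumes y: "y \<in> carrier G" and a: "a \<in> carrier G" and inverts: "y \<otimes> a = inv a \<otimes> y"
  shows "y [^] (j::int) \<otimes> a [^] (k::int) = a [^] (if even j then k else -k) \<otimes> y [^] j"
proof (induction j arbitrary: k rule: int_induct[where k = 0])
  case base
  show ?case using a by simp
next
  case (step1 j)
  have "y [^] (j + 1) \<otimes> a [^] k = y [^] j \<otimes> (y \<otimes> a [^] k)"
    using y a by (simp add: int_pow_mult m_assoc)
  also have "\<dots> = y [^] j \<otimes> a [^] (-k) \<otimes> y"
    using inverting_int_pow[OF assms] y a by (simp add: m_assoc)
  also have "\<dots> = a [^] (if even (j + 1) then k else -k) \<otimes> y [^] (j + 1)"
    using step1.IH y a by (simp add: int_pow_mult m_assoc)
  finally show ?case .
next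
  case (step2 j)
  have "inv y \<otimes> a [^] k = a [^] (-k) \<otimes> inv y"
    using inverting_int_pow[OF assms, of "-k"] y a by (simp add: inv_solve_left inv_solve_right m_assoc)
  then have "y [^] (j - 1) \<otimes> a [^] k = y [^] j \<otimes> a [^] (-k) \<otimes> inv y"
    using y a by (simp add: int_pow_diff m_assoc)
  also have "\<dots> = a [^] (if even (j - 1) then k else -k) \<otimes> y [^] (j - 1)"
    using step2.IH y a by (simp add: int_pow_diff m_assoc)
  finally show ?case .
qed

lemma (in group) generate_inverting_pair:
  assumes y: "y \<in> carrier G" and a: "a \<in> carrier G" and inverts: "y \<otimes> a = inv a \<otimes> y"
  shows "generate G {a, y} \<subseteq> {a [^] (i::int) \<otimes> y [^] (j::int) | i j. True}"
proof
  fix h assume "h \<in> generate G {a, y}"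
  then show "h \<in> {a [^] (i::int) \<otimes> y [^] (j::int) | i j. True}"
  proof induction
    case one
    have "\<one> = a [^] (0::int) \<otimes> y [^] (0::int)" using a y by simp
    then show ?case by blast
  next
    case (incl h)
    have "a = a [^] (1::int) \<otimes> y [^] (0::int)" "y = a [^] (0::int) \<otimes> y [^] (1::int)"
      using a y by simp_all
    with incl show ?case by blast
  next
    case (inv h)
    have "inv a = a [^] (-1::int) \<otimes> y [^] (0::int)" "inv y = a [^] (0::int) \<otimes> y [^] (-1::int)"
      using a y by (simp_all add: int_pow_neg)
    with inv show ?case by blast
  next
    case (eng h1 h2)
    then obtain i j k l :: int where "h1 = a [^] i \<otimes> y [^] j" and "h2 = a [^] k \<otimes> y [^] l"
      by blast
    then have "h1 \<otimes> h2 = a [^] i \<otimes> (y [^] j \<otimes> a [^] k) \<otimes> y [^] l"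
      using a y by (simp add: m_assoc)
    also have "\<dots> = a [^] (i + (if even j then k else -k)) \<otimes> y [^] (j + l)"
      using inverting_int_pow_commute[OF assms] a y by (simp add: m_assoc int_pow_mult)
    finally show ?case by blast
  qed
qed

lemma (in group) int_pow_eq_neg_imp_one:
  assumes a: "a \<in> carrier G" and ord: "ord a = 0 \<or> odd (ord a)" and "a [^] (i::int) = a [^] (-i)"
  shows "a [^] i = \<one>"
proof -
  have "int (ord a) dvd 2 * i"
    using assms int_pow_eq[OF a] by (metis dvd_minus_iff minus_diff_eq diff_minus_eq_add mult_2)
  then have "int (ord a) dvd i"
    using ord by (cases "ord a = 0") (auto simp: coprime_commute coprime_dvd_mult_right_iff)
  then show ?thesis
    using a by (simp add: int_pow_eq_id)
qed

lemma (in group) generate_square_subset_centralizer: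
  assumes y: "y \<in> carrier G" and a: "a \<in> carrier G" and inverts: "y \<otimes> a = inv a \<otimes> y"
  shows "generate G {y [^] (2::nat)} \<subseteq> centralizer G (generate G {a, y})"
proof -
  have "y [^] (2::int) \<otimes> a = a \<otimes> y [^] (2::int)"
    using inverting_int_pow_commute[OF assms, of 2 1] a y by simp
  moreover have "y [^] (2::nat) \<otimes> y = y \<otimes> y [^] (2::nat)"
    using nat_pow_comm[OF y, of 2 1] y by simp
  ultimately have "y [^] (2::nat) \<in> centralizer G {a, y}"
    using y by (simp add: centralizer_def flip: int_pow_int)
  then show ?thesis
    using a y by (simp add: centralizer_generate centralizer_is_subgroup generate_subgroup_incl)
qed

lemma (in group) centralizer_inverting_pair_subset:
  assumes self_centralizing: "\<And>H. subgroup H G \<Longrightarrow> \<not> (\<forall>h\<in>H. \<forall>k\<in>H. h \<otimes> k = k \<otimes> h)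
            \<Longrightarrow> centralizer G H \<subseteq> H"
    and a: "a \<in> carrier G" and a_nontriv: "a \<noteq> \<one>" and ord: "ord a = 0 \<or> odd (ord a)"
    and y: "y \<in> carrier G" and inverts: "y \<otimes> a = inv a \<otimes> y"
  shows "centralizer G (generate G {a, y}) \<subseteq> generate G {y [^] (2::nat)}"
proof
  have commute: "y [^] j \<otimes> a [^] k = a [^] (if even j then k else -k) \<otimes> y [^] j" for j k :: int
    by (rule inverting_int_pow_commute[OF y a inverts])
  have a_ne_inv: "a \<noteq> inv a"
    using int_pow_eq_neg_imp_one[OF a ord, of 1] a a_nontriv by (auto simp: int_pow_neg)
  then have "a \<otimes> y \<noteq> y \<otimes> a"
    using inverts a y by simp
  then have "\<not> (\<forall>h\<in>generate G {a, y}. \<forall>k\<in>generate G {a, y}. h \<otimes> k = k \<otimes> h)"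
    by (auto intro: generate.incl)
  then have self: "centralizer G (generate G {a, y}) \<subseteq> generate G {a, y}"
    using self_centralizing a y by (simp add: generate_is_subgroup)
  fix c assume c: "c \<in> centralizer G (generate G {a, y})"
  then obtain i j :: int where c_eq: "c = a [^] i \<otimes> y [^] j"
    using self generate_inverting_pair[OF y a inverts] by blast
  from c have "c \<otimes> y = y \<otimes> c" and "c \<otimes> a = a \<otimes> c"
    using a y by (auto simp: centralizer_def intro: generate.incl)
  have "a [^] i \<otimes> (y \<otimes> y [^] j) = c \<otimes> y"
    using c_eq a y int_pow_mult[OF y, of j 1] int_pow_mult[OF y, of 1 j]
    by (simp add: m_assoc add.commute)
  also have "\<dots> = y \<otimes> c" by fact
  also have "\<dots> = a [^] (-i) \<otimes> (y \<otimes> y [^] j)"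
    using c_eq commute[of 1 i] a y by (simp add: m_assoc[symmetric])
  finally have "a [^] i = \<one>"
    using int_pow_eq_neg_imp_one[OF a ord] a y by simp
  then have c_pow: "c = y [^] j"
    using c_eq y by simp
  have "even j"
  proof (rule ccontr)
    assume "odd j"
    then have "inv a \<otimes> y [^] j = a \<otimes> y [^] j"
      using commute[of j 1] \<open>c \<otimes> a = a \<otimes> c\<close> c_pow a y by (simp add: int_pow_neg)
    then show False
      using a_ne_inv a y by simp
  qed
  then obtain l where "j = 2 * l" by blast
  then have "c = (y [^] (2::nat)) [^] l"
    using c_pow y by (simp add: int_pow_pow flip: int_pow_int)
  then show "c \<in> generate G {y [^] (2::nat)}"
    using y generate_pow by blast
qed

lemma (in group) centralizer_generate_inverting_pair:
  assumes "\<And>H. subgroup H G \<Longrightarrow> \<not> (\<forall>h\<in>H. \<forall>k\<in>H. h \<otimes> k = k \<otimes> h)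
            \<Longrightarrow> centralizer G H \<subseteq> H"
    and "a \<in> carrier G" "a \<noteq> \<one>" "ord a = 0 \<or> odd (ord a)"
    and "y \<in> carrier G" "y \<otimes> a = inv a \<otimes> y"
  shows "centralizer G (generate G {a, y}) = generate G {y [^] (2::nat)}"
  using centralizer_inverting_pair_subset[OF assms] generate_square_subset_centralizer[OF assms(5,2,6)]
  by (rule equalityI)

lemma (in group) inverting_ord_dvd:
  assumes self_centralizing: "\<And>H. subgroup H G \<Longrightarrow> \<not> (\<forall>h\<in>H. \<forall>k\<in>H. h \<otimes> k = k \<otimes> h)
            \<Longrightarrow> centralizer G H \<subseteq> H"
    and a: "a \<in> carrier G" and a_nontriv: "a \<noteq> \<one>" and ord: "ord a = 0 \<or> odd (ord a)"
    and x: "x \<in> carrier G" and inverts: "x \<otimes> a = inv a \<otimes> x"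
    and m: "odd m"
  shows "\<exists>l. int (ord x) dvd 2 * (int m * l - 1)"
proof -
  define y where "y = x [^] int m"
  have y: "y \<in> carrier G"
    using x by (simp add: y_def)
  have y_inverts: "y \<otimes> a = inv a \<otimes> y"
    using inverting_int_pow_commute[OF x a inverts, of "int m" 1] m a x
    by (simp add: y_def int_pow_neg)
  have "x [^] (2::int) \<otimes> a = a \<otimes> x [^] (2::int)"
    using inverting_int_pow_commute[OF x a inverts, of 2 1] a by simp
  moreover have "x [^] (2::int) \<otimes> y = y \<otimes> x [^] (2::int)"
    using x by (simp add: y_def flip: int_pow_mult) (simp add: add.commute)
  ultimately have "x [^] (2::int) \<in> centralizer G {a, y}"
    using x by (simp add: centralizer_def)
  then have "x [^] (2::int) \<in> generate G {y [^] (2::nat)}"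
    using centralizer_generate_inverting_pair[OF self_centralizing a a_nontriv ord y y_inverts]
      centralizer_generate[of "{a, y}"] a y by simp
  then obtain l :: int where "x [^] (2::int) = (y [^] (2::nat)) [^] l"
    using y generate_pow by auto
  also have "\<dots> = x [^] (2 * int m * l)"
    using x by (simp add: y_def int_pow_pow mult_ac flip: int_pow_int)
  finally have "int (ord x) dvd 2 * int m * l - 2"
    using int_pow_eq[OF x] by blast
  then show ?thesis
    by (metis right_diff_distrib mult.assoc mult.right_neutral)
qed

lemma power_of_two_if_odd_divisors_trivial:
  fixes n :: nat
  assumes "n > 0" and "\<And>q. odd q \<Longrightarrow> q dvd n \<Longrightarrow> q = 1"
  shows "\<exists>k. n = 2 ^ k"
  using assms
proof (induction n rule: less_induct)
  case (less n)
  show ?case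
  proof (cases "even n")
    case True
    then obtain m where m: "n = 2 * m" by blast
    have "\<exists>k. m = 2 ^ k"
      using less.IH[of m] less.prems m by force
    then show ?thesis
      using m by (metis power_Suc)
  next
    case False
    then show ?thesis
      using less.prems(2)[of n] by (metis dvd_refl power_0)
  qed
qed

lemma power_of_two_if_dvd_two_mult_pred:
  fixes n :: nat
  assumes "\<And>m. odd m \<Longrightarrow> \<exists>l. int n dvd 2 * (int m * l - 1)"
  shows "n \<noteq> 0 \<and> (\<exists>k. n = 2 ^ k)"
proof
  show "n \<noteq> 0"
  proof
    assume "n = 0"
    moreover obtain l where "int n dvd 2 * (int 3 * l - 1)"
      using assms[of 3] by auto
    ultimately have "2 * (3 * l - 1) = 0"
      by simp
    then show False
      by presburger
  qed
  moreover have "q = 1" if q: "odd q" "q dvd n" for q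
  proof -
    obtain l where "int n dvd 2 * (int q * l - 1)"
      using assms q(1) by blast
    then have "int q dvd 2 * (int q * l - 1)"
      using q(2) dvd_trans int_dvd_int_iff by blast
    moreover have "coprime (int q) 2"
      using q(1) by (simp add: coprime_commute)
    ultimately have "int q dvd int q * l - 1"
      by (simp only: coprime_dvd_mult_right_iff)
    from dvd_diff[OF dvd_triv_left[of "int q" l] this] show "q = 1"
      by simp
  qed
  ultimately show "\<exists>k. n = 2 ^ k"
    by (intro power_of_two_if_odd_divisors_trivial) auto
qed

theorem lemma2p6:
  fixes G (structure) and a x :: 'a
  assumes "group G"
    and "\<And>H. subgroup H G \<Longrightarrow> \<not> (\<forall>h\<in>H. \<forall>k\<in>H. h \<otimes> k = k \<otimes> h)
            \<Longrightarrow> centralizer G H \<subseteq> H"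
    and "a \<in> carrier G" and "a \<noteq> \<one>"
    and "group.ord G a = 0 \<or> odd (group.ord G a)"
    and "x \<in> carrier G"
    and "inv x \<otimes> a \<otimes> x = inv a"
  shows "group.ord G x \<noteq> 0 \<and> (\<exists>k::nat. group.ord G x = 2 ^ k)
         \<and> centralizer G (generate G {a, x}) = generate G {x [^] (2::nat)}"
proof -
  interpret group G by fact
  have inverts: "x \<otimes> a = inv a \<otimes> x"
    using assms(6,3,7) by (rule inverts_if_conj_eq_inv)
  have "ord x \<noteq> 0 \<and> (\<exists>k. ord x = 2 ^ k)"
    using inverting_ord_dvd[OF assms(2-6) inverts] by (rule power_of_two_if_dvd_two_mult_pred)
  then show ?thesis
    using centralizer_generate_inverting_pair[OF assms(2-6) inverts] by simp
qed

end
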